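(* Let $I=[0,2\pi]$, $c:I^n\to\mathbb R\cup\{+\infty\}$ continuous, and $v\in\mathrm L^1(I)$ with $c(x)-\sum_{j=1}^nv(x_j)\ge0$ for Lebesgue-a.e. $x\in I^n$. Then for every $\gamma\in\mathcal P(I^n)$ whose sum of one-dimensional marginals $\rho_\gamma=\sum_{j=1}^n\pi_j^\#\gamma$ is (given by) a continuous function on $I$, $\int_{I^n}c\,d\gamma-\int_I\rho_\gamma(x)v(x)\,dx\ge0.$ In addition, if $\rho\in\mathcal D_{\rm per}$ and $v_0(\rho)\in\mathrm H^{-1}_{\rm per}(I)$ is a normalized generalized Kantorovich potential for $\rho$ (with respect to the cost $c$) such that $v\ge v_0(\rho)$ in $\mathrm H^{-1}_{\rm per}(I)$, then $v=v_0(\rho)$ in $\mathrm H^{-1}_{\rm per}(I)$.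
   Context: $\pi_j$ is the $j$-th coordinate projection. $\mathrm H^1_{\rm per}(I)$: periodic $\mathrm H^1$, $\mathrm H^{-1}_{\rm per}(I)$ its dual with pairing $\langle\cdot,\cdot\rangle$; $\mathrm L^1$ functions act on $\mathrm H^1_{\rm per}$ by integration. $u\ge v$ in $\mathrm H^{-1}_{\rm per}$ means $\langle u-v,\xi\rangle\ge0$ for all $0\le\xi\in\mathrm H^1_{\rm per}(I)$. $\mathcal D_{\rm per}=\{\rho\in\mathrm H^1_{\rm per}(I):\rho>0\text{ on }I,\int\rho=1\}$. $F_{\rm OT}(\xi)=\min\{\int c\,d\gamma:\gamma\in\mathcal P(I^n),\text{ all marginals }=\xi\}$. A generalized Kantorovich potential for $\rho$ is $v_0\in\mathrm H^{-1}_{\rm per}(I)$ with $F_{\rm OT}(\xi)-n\langle v_0,\xi\rangle\ge F_{\rm OT}(\rho)-n\langle v_0,\rho\rangle$ for all $\xi\in\mathcal P(I)$ with $\sqrt\xi\in\mathrm H^1_{\rm per}(I)$; it is normalized if $F_{\rm OT}(\rho)=n\langle v_0,\rho\rangle$. *)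

theory Defs
  imports "HOL-Probability.Probability"
begin

definition Iper :: "real set" where
  "Iper = {0 .. 2 * pi}"

definition Icube :: "(real ^ 'n) set" where
  "Icube = {x. \<forall>j. x $ j \<in> Iper}"

definition prob_on_cube :: "(real ^ 'n) measure \<Rightarrow> bool" where
  "prob_on_cube \<gamma> \<longleftrightarrow> prob_space \<gamma> \<and> space \<gamma> = Icube
      \<and> sets \<gamma> = sets (restrict_space borel Icube)"

definition ereal_integral :: "'a measure \<Rightarrow> ('a \<Rightarrow> ereal) \<Rightarrow> ereal" where
  "ereal_integral M f =
     enn2ereal (\<integral>\<^sup>+ x. e2ennreal (f x) \<partial>M) - enn2ereal (\<integral>\<^sup>+ x. e2ennreal (- f x) \<partial>M)"

text \<open>Periodic H^1 on I: xi is absolutely continuous on I with weak derivative g in L^2(I),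
  and xi(0) = xi(2 pi).\<close>
definition h1per_deriv :: "(real \<Rightarrow> real) \<Rightarrow> (real \<Rightarrow> real) \<Rightarrow> bool" where
  "h1per_deriv \<xi> g \<longleftrightarrow>
     set_integrable lborel Iper g \<and> set_integrable lborel Iper (\<lambda>x. (g x)\<^sup>2)
     \<and> (\<forall>x\<in>Iper. \<xi> x = \<xi> 0 + (LINT t:{0..x}|lborel. g t))
     \<and> \<xi> 0 = \<xi> (2 * pi)"

definition H1per :: "(real \<Rightarrow> real) \<Rightarrow> bool" where
  "H1per \<xi> \<longleftrightarrow> (\<exists>g. h1per_deriv \<xi> g)"

text \<open>H^{-1}_per: bounded linear functionals on H^1_per (w.r.t. the H^1 norm).\<close>
definition Hm1per :: "((real \<Rightarrow> real) \<Rightarrow> real) \<Rightarrow> bool" where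
  "Hm1per u \<longleftrightarrow>
     (\<forall>\<xi> \<eta> a b. H1per \<xi> \<longrightarrow> H1per \<eta> \<longrightarrow>
        u (\<lambda>x. a * \<xi> x + b * \<eta> x) = a * u \<xi> + b * u \<eta>)
     \<and> (\<exists>K. \<forall>\<xi> g. h1per_deriv \<xi> g \<longrightarrow>
        \<bar>u \<xi>\<bar> \<le> K * sqrt ((LINT x:Iper|lborel. (\<xi> x)\<^sup>2) + (LINT x:Iper|lborel. (g x)\<^sup>2)))"

definition L1_pair :: "(real \<Rightarrow> real) \<Rightarrow> (real \<Rightarrow> real) \<Rightarrow> real" where
  "L1_pair v \<xi> = (LINT x:Iper|lborel. v x * \<xi> x)"

definition Dper :: "(real \<Rightarrow> real) \<Rightarrow> bool" where
  "Dper \<rho> \<longleftrightarrow> H1per \<rho> \<and> (\<forall>x\<in>Iper. \<rho> x > 0) \<and> (LINT x:Iper|lborel. \<rho> x) = 1"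

definition has_marginals :: "(real ^ 'n) measure \<Rightarrow> (real \<Rightarrow> real) \<Rightarrow> bool" where
  "has_marginals \<gamma> \<xi> \<longleftrightarrow>
     (\<forall>j. distr \<gamma> borel (\<lambda>x. x $ j) = density lborel (\<lambda>t. ennreal (\<xi> t) * indicator Iper t))"

text \<open>Multi-marginal optimal transport functional (the minimum is written as an infimum).\<close>
definition F_OT :: "(real ^ 'n \<Rightarrow> ereal) \<Rightarrow> (real \<Rightarrow> real) \<Rightarrow> ereal" where
  "F_OT c \<xi> = Inf {ereal_integral \<gamma> c | \<gamma>. prob_on_cube \<gamma> \<and> has_marginals \<gamma> \<xi>}"

definition admissible_density :: "(real \<Rightarrow> real) \<Rightarrow> bool" where
  "admissible_density \<xi> \<longleftrightarrow> (\<forall>x\<in>Iper. \<xi> x \<ge> 0) \<and> set_integrable lborel Iper \<xi>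
     \<and> (LINT x:Iper|lborel. \<xi> x) = 1 \<and> H1per (\<lambda>x. sqrt (\<xi> x))"

definition gen_kantorovich_potential ::
  "(real ^ 'n \<Rightarrow> ereal) \<Rightarrow> (real \<Rightarrow> real) \<Rightarrow> ((real \<Rightarrow> real) \<Rightarrow> real) \<Rightarrow> bool" where
  "gen_kantorovich_potential c \<rho> v0 \<longleftrightarrow> Hm1per v0 \<and>
     (\<forall>\<xi>. admissible_density \<xi> \<longrightarrow>
        F_OT c \<xi> - ereal (real CARD('n) * v0 \<xi>) \<ge> F_OT c \<rho> - ereal (real CARD('n) * v0 \<rho>))"

definition normalized_gen_kantorovich_potential ::
  "(real ^ 'n \<Rightarrow> ereal) \<Rightarrow> (real \<Rightarrow> real) \<Rightarrow> ((real \<Rightarrow> real) \<Rightarrow> real) \<Rightarrow> bool" where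
  "normalized_gen_kantorovich_potential c \<rho> v0 \<longleftrightarrow>
     gen_kantorovich_potential c \<rho> v0 \<and> F_OT c \<rho> = ereal (real CARD('n) * v0 \<rho>)"

end

theory Submission
  imports Defs
begin

(* Suppose c(x) < sum_j v(x_j) at some point x of the cube. By continuity, c stays below
   sum_j q_j near x, for numbers q_j slightly below v(x_j). Unless some x_j is a point where
   v exceeds its essential upper limit (such points form a Lebesgue null set), every set
   {t near x_j. v t > q_j} has positive measure, so their product is a set of positive
   measure on which c < sum_j v(x_j), contradicting the almost everywhere inequality. Hence
   c >= sum_j v(x_j) whenever no coordinate of x lies in that null set. The marginals of gamma
   are absolutely continuous, so this holds gamma-almost everywhere, and integrating gives
   the integral of c against gamma >= the integral of rho_gamma v.

   Applied to the plans with marginals rho, this yields n <v, rho> <= F_OT(rho) = n <v0, rho>.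
   So the positive functional v - v0 is nonpositive at rho, which is bounded below by a
   positive constant; since C rho +- xi >= 0 for every xi in H^1_per and C large,
   v - v0 vanishes on H^1_per. *)

lemma set_integrable_continuous_mult:
  fixes \<xi> v :: "real \<Rightarrow> real"
  assumes S: "compact S" and \<xi>: "continuous_on S \<xi>" and v: "set_integrable lborel S v"
  shows "set_integrable lborel S (\<lambda>x. \<xi> x * v x)"
proof -
  obtain M where M: "\<And>x. x \<in> S \<Longrightarrow> \<bar>\<xi> x\<bar> \<le> M"
    using compact_imp_bounded[OF compact_continuous_image[OF \<xi> S]] by (auto simp: bounded_iff)
  show ?thesis
  proof (rule set_integrable_bound)
    show "set_integrable lborel S (\<lambda>x. M * v x)"
      using v by (rule set_integrable_mult_right)
    have "(\<lambda>x. indicator S x *\<^sub>R \<xi> x) \<in> borel_measurable borel"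
      using S \<xi> by (intro borel_measurable_continuous_on_indicator) (auto intro: borel_closed compact_imp_closed)
    moreover have "(\<lambda>x. indicator S x *\<^sub>R v x) \<in> borel_measurable lborel"
      using v unfolding set_integrable_def by (rule borel_measurable_integrable)
    ultimately have "(\<lambda>x. (indicator S x *\<^sub>R \<xi> x) * (indicator S x *\<^sub>R v x)) \<in> borel_measurable lborel"
      by measurable
    moreover have "(\<lambda>x. (indicator S x *\<^sub>R \<xi> x) * (indicator S x *\<^sub>R v x))
        = (\<lambda>x. indicator S x *\<^sub>R (\<xi> x * v x))"
      by (auto simp: indicator_def fun_eq_iff)
    ultimately show "set_borel_measurable lborel S (\<lambda>x. \<xi> x * v x)"
      by (simp add: set_borel_measurable_def)
    show "AE x\<in>S in lborel. norm (\<xi> x * v x) \<le> norm (M * v x)"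
    proof (intro AE_I2 impI)
      fix x assume "x \<in> S"
      then have "\<bar>\<xi> x\<bar> \<le> \<bar>M\<bar>"
        using M by force
      then show "norm (\<xi> x * v x) \<le> norm (M * v x)"
        by (simp add: abs_mult mult_right_mono)
    qed
  qed
qed

lemma set_integral_indicator_mult:
  fixes f :: "'a \<Rightarrow> real"
  shows "(LINT t:A|M. indicator B t * f t) = (LINT t:(A \<inter> B)|M. f t)"
  unfolding set_lebesgue_integral_def
  by (rule Bochner_Integration.integral_cong) (auto simp: indicator_def)

lemma set_integrable_square_lincomb:
  fixes f g :: "'a \<Rightarrow> real"
  assumes f: "set_integrable M S f" "set_integrable M S (\<lambda>x. (f x)\<^sup>2)"
    and g: "set_integrable M S g" "set_integrable M S (\<lambda>x. (g x)\<^sup>2)"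
  shows "set_integrable M S (\<lambda>x. (a * f x + b * g x)\<^sup>2)"
proof (rule set_integrable_bound)
  show "set_integrable M S (\<lambda>x. 2 * a\<^sup>2 * (f x)\<^sup>2 + 2 * b\<^sup>2 * (g x)\<^sup>2)"
    using f(2) g(2) by (intro set_integral_add(1) set_integrable_mult_right)
  have "(\<lambda>x. indicator S x *\<^sub>R f x) \<in> borel_measurable M" "(\<lambda>x. indicator S x *\<^sub>R g x) \<in> borel_measurable M"
    using f(1) g(1) unfolding set_integrable_def by (simp_all add: borel_measurable_integrable)
  then have "(\<lambda>x. (a * (indicator S x *\<^sub>R f x) + b * (indicator S x *\<^sub>R g x))\<^sup>2) \<in> borel_measurable M"
    by measurable
  moreover have "(\<lambda>x. (a * (indicator S x *\<^sub>R f x) + b * (indicator S x *\<^sub>R g x))\<^sup>2)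
      = (\<lambda>x. indicator S x *\<^sub>R (a * f x + b * g x)\<^sup>2)"
    by (auto simp: fun_eq_iff indicator_def)
  ultimately show "set_borel_measurable M S (\<lambda>x. (a * f x + b * g x)\<^sup>2)"
    by (simp add: set_borel_measurable_def)
  show "AE x\<in>S in M. norm ((a * f x + b * g x)\<^sup>2) \<le> norm (2 * a\<^sup>2 * (f x)\<^sup>2 + 2 * b\<^sup>2 * (g x)\<^sup>2)"
  proof (intro AE_I2 impI)
    fix x
    have "(a * f x + b * g x)\<^sup>2 \<le> 2 * a\<^sup>2 * (f x)\<^sup>2 + 2 * b\<^sup>2 * (g x)\<^sup>2"
      using zero_le_power2[of "a * f x - b * g x"] by (simp add: power2_eq_square algebra_simps)
    then show "norm ((a * f x + b * g x)\<^sup>2) \<le> norm (2 * a\<^sup>2 * (f x)\<^sup>2 + 2 * b\<^sup>2 * (g x)\<^sup>2)"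
      by simp
  qed
qed

lemma ereal_diff_nonneg_iff: "0 \<le> a - ereal s \<longleftrightarrow> ereal s \<le> a"
  by (cases a) auto

lemma ereal_integral_ge_integral:
  fixes f :: "'a \<Rightarrow> real" and c :: "'a \<Rightarrow> ereal"
  assumes f: "integrable M f" and ge: "AE x in M. ereal (f x) \<le> c x"
  shows "ereal (integral\<^sup>L M f) \<le> ereal_integral M c"
proof -
  define Fp where "Fp = (\<integral>\<^sup>+x. ennreal (f x) \<partial>M)"
  define Fm where "Fm = (\<integral>\<^sup>+x. ennreal (- f x) \<partial>M)"
  define Cp where "Cp = (\<integral>\<^sup>+x. e2ennreal (c x) \<partial>M)"
  define Cm where "Cm = (\<integral>\<^sup>+x. e2ennreal (- c x) \<partial>M)"
  have fin: "Fp < \<infinity>" "Fm < \<infinity>"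
    using f unfolding real_integrable_def Fp_def Fm_def by (auto simp: top.not_eq_extremum)
  have "Fp \<le> Cp"
    unfolding Fp_def Cp_def
    using ge by (intro nn_integral_mono_AE) (auto elim!: eventually_mono dest: e2ennreal_mono)
  then have pos: "ereal (enn2real Fp) \<le> enn2ereal Cp"
    using fin by (cases Fp rule: ennreal_cases) (auto simp: less_eq_ennreal.rep_eq)
  have "Cm \<le> Fm"
    unfolding Fm_def Cm_def using ge
  proof (intro nn_integral_mono_AE, eventually_elim)
    case (elim x)
    then have "- c x \<le> ereal (- f x)" by (cases "c x") auto
    then show ?case by (metis e2ennreal_ereal e2ennreal_mono)
  qed
  then have neg: "enn2ereal Cm \<le> ereal (enn2real Fm)"
    using fin by (cases Fm rule: ennreal_cases) (auto simp: less_eq_ennreal.rep_eq)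
  have "integral\<^sup>L M f = enn2real Fp - enn2real Fm"
    unfolding Fp_def Fm_def by (rule real_lebesgue_integral_def[OF f])
  then show ?thesis
    using ereal_minus_mono[OF pos neg] by (simp add: ereal_integral_def Cp_def Cm_def)
qed

lemma AE_ex_in_non_null_set:
  assumes "AE x in M. P x" and "emeasure M S \<noteq> 0"
  shows "\<exists>x\<in>S. P x"
proof (rule ccontr)
  assume "\<not> (\<exists>x\<in>S. P x)"
  moreover obtain N where "{x \<in> space M. \<not> P x} \<subseteq> N" "emeasure M N = 0" "N \<in> sets M"
    using assms(1) by (rule AE_E)
  moreover have "S \<subseteq> space M"
    using assms(2) by (auto dest: emeasure_neq_0_sets sets.sets_into_space)
  ultimately have "emeasure M S \<le> emeasure M N"
    by (intro emeasure_mono) auto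
  with \<open>emeasure M N = 0\<close> assms(2) show False
    by simp
qed

lemma continuous_on_less_near:
  fixes c :: "'a::metric_space \<Rightarrow> 'b::linorder_topology"
  assumes "continuous_on T c" "x \<in> T" "c x < a"
  obtains e where "e > 0" "\<And>y. y \<in> T \<Longrightarrow> dist y x < e \<Longrightarrow> c y < a"
proof -
  have "eventually (\<lambda>y. c y < a) (at x within T)"
    using assms by (intro order_tendstoD(2)) (auto simp: continuous_on_def)
  then obtain d where "d > 0" "\<And>y. y \<in> T \<Longrightarrow> 0 < dist y x \<Longrightarrow> dist y x < d \<Longrightarrow> c y < a"
    by (auto simp: eventually_at)
  with assms(3) show ?thesis
    by (metis that zero_less_dist_iff)
qed

lemma dist_vec_lt_if_coordinates_close:
  fixes x y :: "real^'n"
  assumes "\<And>j. \<bar>y $ j - x $ j\<bar> < e / CARD('n)"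
  shows "dist y x < e"
proof -
  have "dist y x \<le> (\<Sum>j\<in>UNIV. \<bar>y $ j - x $ j\<bar>)"
    using norm_le_l1_cart[of "y - x"] by (simp add: dist_norm)
  also have "\<dots> < (\<Sum>j\<in>(UNIV::'n set). e / CARD('n))"
    using assms by (intro sum_strict_mono) auto
  also have "\<dots> = e"
    by simp
  finally show ?thesis .
qed

lemma borel_measurable_vec_nth [measurable]: "(\<lambda>x::real^'n. x $ j) \<in> borel_measurable borel"
  by (intro borel_measurable_continuous_onI continuous_intros)

lemma prod_Basis_vec:
  "(\<Prod>b\<in>(Basis :: (real^'n) set). g b) = (\<Prod>j\<in>UNIV. g (axis j 1))"
proof -
  have Basis: "(Basis :: (real^'n) set) = range (\<lambda>j. axis j 1)"
    by (auto simp: Basis_vec_def)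
  show ?thesis
    unfolding Basis by (subst prod.reindex) (auto simp: inj_on_def axis_eq_axis)
qed

lemma emeasure_lborel_vec_coordinates:
  fixes E :: "'n::finite \<Rightarrow> real set"
  assumes E [measurable]: "\<And>j. E j \<in> sets borel"
  shows "emeasure (lborel :: (real^'n) measure) {y. \<forall>j. y $ j \<in> E j}
    = (\<Prod>j\<in>UNIV. emeasure lborel (E j))"
proof -
  define F where "F b = E (SOME j. b = axis j (1::real))" for b :: "real^'n"
  have F_axis: "F (axis j 1) = E j" for j
  proof -
    have "(SOME i. axis j (1::real) = axis i 1) = j"
      by (rule some_equality) (auto simp: axis_eq_axis)
    then show ?thesis by (simp add: F_def)
  qed
  have F [measurable]: "F b \<in> sets borel" for b
    by (simp add: F_def)
  have box: "{y::real^'n. \<forall>j. y $ j \<in> E j} \<in> sets lborel"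
    by measurable
  have "indicator {y. \<forall>j. y $ j \<in> E j} y = (\<Prod>b\<in>Basis. indicator (F b) (y \<bullet> b) :: ennreal)"
    for y :: "real^'n"
    by (auto simp: prod_Basis_vec F_axis inner_axis indicator_def prod_zero_iff)
  then have "emeasure (lborel :: (real^'n) measure) {y. \<forall>j. y $ j \<in> E j}
      = (\<integral>\<^sup>+y. (\<Prod>b\<in>Basis. indicator (F b) (y \<bullet> b)) \<partial>lborel)"
    using box by (simp flip: nn_integral_indicator)
  also have "\<dots> = (\<Prod>b\<in>Basis. emeasure lborel (F b))"
    by (subst nn_integral_lborel_prod) auto
  finally show ?thesis
    by (simp add: prod_Basis_vec F_axis)
qed

lemma Iper_sets [measurable]: "Iper \<in> sets borel"
  by (simp add: Iper_def)

lemma compact_Iper: "compact Iper"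
  by (simp add: Iper_def)

lemma continuous_on_Iper_set_integrable:
  fixes f :: "real \<Rightarrow> real"
  assumes "continuous_on Iper f"
  shows "set_integrable lborel Iper f"
  unfolding set_integrable_def using compact_Iper assms by (rule borel_integrable_compact)

section \<open>Points above the essential upper limit\<close>

definition exceedance_set :: "real set \<Rightarrow> (real \<Rightarrow> real) \<Rightarrow> real \<Rightarrow> real \<Rightarrow> real \<Rightarrow> real set" where
  "exceedance_set S w a b q = {t \<in> S \<inter> {a<..<b}. q < w t}"

(* Contains every point t of S at which w t exceeds the essential upper limit of w (on S) at t. *)
definition ess_peak_set :: "real set \<Rightarrow> (real \<Rightarrow> real) \<Rightarrow> real set" where
  "ess_peak_set S w =
    (\<Union>(a, b, q) \<in> {(a, b, q) \<in> \<rat> \<times> \<rat> \<times> \<rat>. exceedance_set S w a b q \<in> null_sets lborel}.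
      exceedance_set S w a b q)"

lemma exceedance_set_sets [measurable]:
  assumes "S \<in> sets borel" "w \<in> borel_measurable borel"
  shows "exceedance_set S w a b q \<in> sets borel"
proof -
  have "{t. q < w t} \<in> sets borel"
    using assms(2) by measurable
  moreover have "exceedance_set S w a b q = S \<inter> {a<..<b} \<inter> {t. q < w t}"
    by (auto simp: exceedance_set_def)
  ultimately show ?thesis
    using assms(1) by simp
qed

lemma ess_peak_set_null: "ess_peak_set S w \<in> null_sets lborel"
  unfolding ess_peak_set_def
proof (rule null_sets_UN')
  show "countable {(a, b, q) \<in> \<rat> \<times> \<rat> \<times> \<rat>. exceedance_set S w a b q \<in> null_sets lborel}"
    by (rule countable_subset[of _ "\<rat> \<times> \<rat> \<times> \<rat>"]) (auto intro: countable_SIGMA countable_rat)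
qed auto

lemma exceedance_set_not_null:
  assumes S: "S \<in> sets borel" and w: "w \<in> borel_measurable borel"
    and t: "t \<in> S" "t \<notin> ess_peak_set S w" "a < t" "t < b" "q < w t"
  shows "emeasure lborel (exceedance_set S w a b q) \<noteq> 0"
proof
  assume null: "emeasure lborel (exceedance_set S w a b q) = 0"
  obtain a' where a': "a' \<in> \<rat>" "a < a'" "a' < t"
    using Rats_dense_in_real[OF t(3)] by blast
  obtain b' where b': "b' \<in> \<rat>" "t < b'" "b' < b"
    using Rats_dense_in_real[OF t(4)] by blast
  obtain q' where q': "q' \<in> \<rat>" "q < q'" "q' < w t"
    using Rats_dense_in_real[OF t(5)] by blast
  have "exceedance_set S w a b q \<in> null_sets lborel"
    by (rule null_setsI) (simp_all add: null exceedance_set_sets[OF S w])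
  moreover have "exceedance_set S w a' b' q' \<subseteq> exceedance_set S w a b q"
    using a' b' q' by (auto simp: exceedance_set_def)
  ultimately have "exceedance_set S w a' b' q' \<in> null_sets lborel"
    using exceedance_set_sets[OF S w] by (simp add: null_sets_subset)
  then have "t \<in> ess_peak_set S w"
    unfolding ess_peak_set_def using a' b' q' t
    by (intro UN_I[of "(a', b', q')"]) (auto simp: exceedance_set_def)
  with t(2) show False ..
qed

lemma ge_sum_off_ess_peak_set:
  fixes c :: "real^'n \<Rightarrow> ereal" and w :: "real \<Rightarrow> real"
  assumes S: "S \<in> sets borel" and w: "w \<in> borel_measurable borel"
    and c_cont: "continuous_on {x. \<forall>j. x $ j \<in> S} c"
    and c_ge: "AE x in lborel. (\<forall>j. x $ j \<in> S) \<longrightarrow> ereal (\<Sum>j\<in>UNIV. w (x $ j)) \<le> c x"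
    and x: "\<forall>j. x $ j \<in> S" "\<forall>j. x $ j \<notin> ess_peak_set S w"
  shows "ereal (\<Sum>j\<in>UNIV. w (x $ j)) \<le> c x"
proof (rule ccontr)
  define n where "n = real CARD('n)"
  have n: "n > 0"
    by (simp add: n_def)
  assume "\<not> ?thesis"
  then obtain r where r: "c x < ereal r" "r < (\<Sum>j\<in>UNIV. w (x $ j))"
    using ereal_dense2[of "c x"] by (force simp: not_le)
  define q where "q j = w (x $ j) - ((\<Sum>i\<in>UNIV. w (x $ i)) - r) / n" for j
  have sum_q: "(\<Sum>j\<in>UNIV. q j) = r"
    using n by (simp add: q_def sum_subtractf n_def)
  have q_below: "q j < w (x $ j)" for j
    using r(2) n by (simp add: q_def)
  obtain e where e: "e > 0" "\<And>y. y \<in> {x. \<forall>j. x $ j \<in> S} \<Longrightarrow> dist y x < e \<Longrightarrow> c y < ereal r"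
    using continuous_on_less_near[OF c_cont _ r(1)] x(1) by blast
  define B where
    "B = {y::real^'n. \<forall>j. y $ j \<in> exceedance_set S w (x $ j - e / n) (x $ j + e / n) (q j)}"
  have "emeasure lborel (exceedance_set S w (x $ j - e / n) (x $ j + e / n) (q j)) \<noteq> 0" for j
    using n e(1) x q_below by (intro exceedance_set_not_null[OF S w]) auto
  then have "emeasure lborel B \<noteq> 0"
    unfolding B_def by (simp add: emeasure_lborel_vec_coordinates exceedance_set_sets[OF S w] prod_zero_iff)
  then obtain y where "y \<in> B" and y_ge: "(\<forall>j. y $ j \<in> S) \<longrightarrow> ereal (\<Sum>j\<in>UNIV. w (y $ j)) \<le> c y"
    using AE_ex_in_non_null_set[OF c_ge] by blast
  then have y_S: "\<forall>j. y $ j \<in> S" and close: "\<bar>y $ j - x $ j\<bar> < e / n" and above: "q j < w (y $ j)"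
    for j
    by (simp_all add: B_def exceedance_set_def abs_diff_less_iff)
  have "c y < ereal r"
    using e(2) y_S dist_vec_lt_if_coordinates_close[of y x e] close by (simp add: n_def)
  moreover have "ereal r < ereal (\<Sum>j\<in>UNIV. w (y $ j))"
    unfolding sum_q[symmetric] using above by (simp add: sum_strict_mono)
  ultimately show False
    using y_ge y_S by (meson less_trans leD)
qed

section \<open>The sum of the one-dimensional marginals\<close>

(* The sum over j of the push-forwards of gamma under the coordinate maps, written as a single
   push-forward of the product of the counting measure on indices with gamma. *)
definition marginal_sum :: "(real^'n) measure \<Rightarrow> real measure" where
  "marginal_sum \<gamma> = distr (count_space UNIV \<Otimes>\<^sub>M \<gamma>) borel (\<lambda>(j, x). x $ j)"

lemma measurable_coordinate_pair:
  fixes \<gamma> :: "(real^'n) measure"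
  assumes "\<And>j. (\<lambda>x. x $ j) \<in> borel_measurable \<gamma>"
  shows "(\<lambda>(j, x). x $ j) \<in> borel_measurable (count_space UNIV \<Otimes>\<^sub>M \<gamma>)"
  using assms by (intro measurable_pair_measure_countable1) auto

lemma sets_marginal_sum [simp]: "sets (marginal_sum \<gamma>) = sets borel"
  by (simp add: marginal_sum_def)

lemma emeasure_marginal_sum:
  fixes \<gamma> :: "(real^'n) measure"
  assumes \<gamma>: "sigma_finite_measure \<gamma>" and nth: "\<And>j. (\<lambda>x. x $ j) \<in> borel_measurable \<gamma>"
    and A: "A \<in> sets borel"
  shows "emeasure (marginal_sum \<gamma>) A = (\<Sum>j\<in>UNIV. emeasure \<gamma> {x \<in> space \<gamma>. x $ j \<in> A})"
proof -
  let ?P = "count_space UNIV \<Otimes>\<^sub>M \<gamma>"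
  have X: "(\<lambda>(j, x). x $ j) -` A \<inter> space ?P \<in> sets ?P"
    using measurable_sets[OF measurable_coordinate_pair[OF nth] A] .
  have "emeasure (marginal_sum \<gamma>) A = emeasure ?P ((\<lambda>(j, x). x $ j) -` A \<inter> space ?P)"
    unfolding marginal_sum_def using A measurable_coordinate_pair[OF nth] by (simp add: emeasure_distr)
  also have "\<dots> = (\<integral>\<^sup>+j. emeasure \<gamma> (Pair j -` ((\<lambda>(j, x). x $ j) -` A \<inter> space ?P)) \<partial>count_space UNIV)"
    using X by (rule sigma_finite_measure.emeasure_pair_measure_alt[OF \<gamma>])
  also have "\<dots> = (\<Sum>j\<in>UNIV. emeasure \<gamma> {x \<in> space \<gamma>. x $ j \<in> A})"
    by (auto simp: nn_integral_count_space_finite space_pair_measure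
             intro!: sum.cong arg_cong2[where f=emeasure])
  finally show ?thesis .
qed

lemma integral_marginal_sum:
  fixes \<gamma> :: "(real^'n) measure" and w :: "real \<Rightarrow> real"
  assumes \<gamma>: "sigma_finite_measure \<gamma>" and nth: "\<And>j. (\<lambda>x. x $ j) \<in> borel_measurable \<gamma>"
    and w: "integrable (marginal_sum \<gamma>) w"
  shows "integrable \<gamma> (\<lambda>x. \<Sum>j\<in>UNIV. w (x $ j))"
    and "(\<integral>x. (\<Sum>j\<in>UNIV. w (x $ j)) \<partial>\<gamma>) = integral\<^sup>L (marginal_sum \<gamma>) w"
proof -
  interpret C: finite_measure "count_space (UNIV :: 'n set)"
    by (rule finite_measure_count_space) simp
  interpret P: pair_sigma_finite "count_space (UNIV :: 'n set)" \<gamma>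
    by (intro pair_sigma_finite.intro C.sigma_finite_measure_axioms \<gamma>)
  have w_borel: "w \<in> borel_measurable borel"
    using borel_measurable_integrable[OF w] unfolding measurable_cong_sets[OF sets_marginal_sum refl] .
  have int_P: "integrable (count_space UNIV \<Otimes>\<^sub>M \<gamma>) (\<lambda>(j, x). w (x $ j))"
    using w unfolding marginal_sum_def
    by (subst (asm) integrable_distr_eq[OF measurable_coordinate_pair[OF nth] w_borel])
       (simp add: case_prod_beta')
  have int_j: "integrable \<gamma> (\<lambda>x. w (x $ j))" for j
    using P.AE_integrable_fst'[OF int_P] by (simp add: AE_count_space)
  then show "integrable \<gamma> (\<lambda>x. \<Sum>j\<in>UNIV. w (x $ j))"
    by (intro Bochner_Integration.integrable_sum)
  have "(\<integral>x. (\<Sum>j\<in>UNIV. w (x $ j)) \<partial>\<gamma>) = (\<Sum>j\<in>UNIV. \<integral>x. w (x $ j) \<partial>\<gamma>)"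
    using int_j by (intro Bochner_Integration.integral_sum)
  also have "\<dots> = integral\<^sup>L (count_space UNIV \<Otimes>\<^sub>M \<gamma>) (\<lambda>(j, x). w (x $ j))"
    using P.integral_fst'[OF int_P] by (simp add: lebesgue_integral_count_space_finite)
  also have "\<dots> = integral\<^sup>L (marginal_sum \<gamma>) w"
    unfolding marginal_sum_def
    by (subst integral_distr[OF measurable_coordinate_pair[OF nth] w_borel]) (simp add: case_prod_beta')
  finally show "(\<integral>x. (\<Sum>j\<in>UNIV. w (x $ j)) \<partial>\<gamma>) = integral\<^sup>L (marginal_sum \<gamma>) w" .
qed

lemma prob_on_cube_measurable_vec_nth:
  assumes "prob_on_cube \<gamma>"
  shows "(\<lambda>x. x $ j) \<in> borel_measurable \<gamma>"
  using assms unfolding prob_on_cube_def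
  by (subst measurable_cong_sets[OF _ refl]) (auto intro: measurable_restrict_space1)

definition has_marginal_sum :: "(real^'n) measure \<Rightarrow> (real \<Rightarrow> real) \<Rightarrow> bool" where
  "has_marginal_sum \<gamma> \<rho> \<longleftrightarrow>
    (\<forall>A\<in>sets borel. (\<Sum>j\<in>UNIV. measure \<gamma> {x\<in>space \<gamma>. x $ j \<in> A}) = (LINT t:(A \<inter> Iper)|lborel. \<rho> t))"

lemma has_marginal_sum_nonneg:
  assumes marg: "has_marginal_sum \<gamma> \<rho>" and \<rho>: "set_integrable lborel Iper \<rho>"
  shows "AE t in lborel. t \<in> Iper \<longrightarrow> 0 \<le> \<rho> t"
proof -
  have "AE t in lborel. 0 \<le> indicator Iper t * \<rho> t"
  proof (rule sigma_finite_measure.density_nonneg[OF lborel.sigma_finite_measure_axioms])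
    show "integrable lborel (\<lambda>t. indicator Iper t * \<rho> t)"
      using \<rho> by (simp add: set_integrable_def)
    fix A :: "real set" assume "A \<in> sets lborel"
    then have "(LINT t:A|lborel. indicator Iper t * \<rho> t) = (\<Sum>j\<in>UNIV. measure \<gamma> {x\<in>space \<gamma>. x $ j \<in> A})"
      using marg by (simp add: has_marginal_sum_def set_integral_indicator_mult)
    then show "0 \<le> (LINT t:A|lborel. indicator Iper t * \<rho> t)"
      by (simp add: sum_nonneg)
  qed
  then show ?thesis
    by eventually_elim (auto simp: indicator_def)
qed

lemma marginal_sum_eq_density:
  assumes \<gamma>: "prob_on_cube \<gamma>" and marg: "has_marginal_sum \<gamma> \<rho>" and \<rho>: "set_integrable lborel Iper \<rho>"
  shows "marginal_sum \<gamma> = density lborel (\<lambda>t. ennreal (indicator Iper t * \<rho> t))"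
proof (rule measure_eqI)
  interpret prob_space \<gamma>
    using \<gamma> by (simp add: prob_on_cube_def)
  have int: "integrable lborel (\<lambda>t. indicator Iper t * \<rho> t)"
    using \<rho> by (simp add: set_integrable_def)
  then have [measurable]: "(\<lambda>t. indicator Iper t * \<rho> t) \<in> borel_measurable borel"
    by (simp add: borel_measurable_integrable)
  have density_measurable: "(\<lambda>t. ennreal (indicator Iper t * \<rho> t)) \<in> borel_measurable lborel"
    by measurable
  fix A :: "real set" assume "A \<in> sets (marginal_sum \<gamma>)"
  then have A: "A \<in> sets borel"
    by simp
  have "emeasure (marginal_sum \<gamma>) A = (\<Sum>j\<in>UNIV. emeasure \<gamma> {x \<in> space \<gamma>. x $ j \<in> A})"
    using sigma_finite_measure_axioms prob_on_cube_measurable_vec_nth[OF \<gamma>] A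
    by (rule emeasure_marginal_sum)
  also have "\<dots> = ennreal (LINT t:A|lborel. indicator Iper t * \<rho> t)"
    using marg A by (simp add: emeasure_eq_measure has_marginal_sum_def set_integral_indicator_mult)
  also have "\<dots> = (\<integral>\<^sup>+t. ennreal (indicator A t *\<^sub>R (indicator Iper t * \<rho> t)) \<partial>lborel)"
    unfolding set_lebesgue_integral_def
  proof (rule nn_integral_eq_integral[symmetric])
    show "integrable lborel (\<lambda>t. indicator A t *\<^sub>R (indicator Iper t * \<rho> t))"
      by (rule integrable_mult_indicator) (simp_all add: A int)
    show "AE t in lborel. 0 \<le> indicator A t *\<^sub>R (indicator Iper t * \<rho> t)"
      using has_marginal_sum_nonneg[OF marg \<rho>] by eventually_elim (simp add: indicator_def)
  qed
  also have "\<dots> = emeasure (density lborel (\<lambda>t. ennreal (indicator Iper t * \<rho> t))) A"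
    using A by (subst emeasure_density[OF density_measurable]) (auto intro!: nn_integral_cong simp: indicator_def)
  finally show "emeasure (marginal_sum \<gamma>) A = emeasure (density lborel (\<lambda>t. ennreal (indicator Iper t * \<rho> t))) A" .
qed simp

lemma integral_sum_vec_nth:
  fixes v :: "real \<Rightarrow> real"
  assumes \<gamma>: "prob_on_cube \<gamma>" and marg: "has_marginal_sum \<gamma> \<rho>" and \<rho>: "continuous_on Iper \<rho>"
    and v: "set_integrable lborel Iper v"
  shows "integrable \<gamma> (\<lambda>x. \<Sum>j\<in>UNIV. v (x $ j))"
    and "(\<integral>x. (\<Sum>j\<in>UNIV. v (x $ j)) \<partial>\<gamma>) = (LINT t:Iper|lborel. \<rho> t * v t)"
proof -
  interpret prob_space \<gamma>
    using \<gamma> by (simp add: prob_on_cube_def)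
  define w where "w t = indicator Iper t * v t" for t
  have w_meas: "w \<in> borel_measurable lborel"
    using v unfolding w_def[abs_def] by (simp add: set_integrable_def borel_measurable_integrable)
  have \<rho>_int: "set_integrable lborel Iper \<rho>"
    using \<rho> by (rule continuous_on_Iper_set_integrable)
  have \<rho>_meas: "(\<lambda>t. indicator Iper t * \<rho> t) \<in> borel_measurable lborel"
    using \<rho>_int by (simp add: set_integrable_def borel_measurable_integrable)
  have \<rho>_nonneg: "AE t in lborel. 0 \<le> indicator Iper t * \<rho> t"
    using has_marginal_sum_nonneg[OF marg \<rho>_int] by eventually_elim (simp add: indicator_def)
  have "integrable lborel (\<lambda>t. indicator Iper t *\<^sub>R (\<rho> t * v t))"
    using set_integrable_continuous_mult[OF compact_Iper \<rho> v] by (simp add: set_integrable_def)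
  moreover have "(\<lambda>t. indicator Iper t *\<^sub>R (\<rho> t * v t)) = (\<lambda>t. (indicator Iper t * \<rho> t) *\<^sub>R w t)"
    by (auto simp: fun_eq_iff w_def indicator_def)
  ultimately have w_marg: "integrable (marginal_sum \<gamma>) w"
    unfolding marginal_sum_eq_density[OF \<gamma> marg \<rho>_int]
    by (simp add: integrable_density[OF w_meas \<rho>_meas \<rho>_nonneg])
  have sum_eq: "(\<Sum>j\<in>UNIV. w (x $ j)) = (\<Sum>j\<in>UNIV. v (x $ j))" if "x \<in> space \<gamma>" for x
    using that \<gamma> by (simp add: prob_on_cube_def Icube_def w_def)
  note marginal = integral_marginal_sum[OF sigma_finite_measure_axioms
      prob_on_cube_measurable_vec_nth[OF \<gamma>] w_marg]
  show "integrable \<gamma> (\<lambda>x. \<Sum>j\<in>UNIV. v (x $ j))"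
    using marginal(1) by (subst (asm) Bochner_Integration.integrable_cong) (simp_all add: sum_eq)
  have "(\<integral>x. (\<Sum>j\<in>UNIV. v (x $ j)) \<partial>\<gamma>) = (\<integral>x. (\<Sum>j\<in>UNIV. w (x $ j)) \<partial>\<gamma>)"
    by (rule Bochner_Integration.integral_cong) (simp_all add: sum_eq)
  also have "\<dots> = integral\<^sup>L (marginal_sum \<gamma>) w"
    by (rule marginal(2))
  also have "\<dots> = (\<integral>t. (indicator Iper t * \<rho> t) *\<^sub>R w t \<partial>lborel)"
    unfolding marginal_sum_eq_density[OF \<gamma> marg \<rho>_int]
    by (rule integral_density[OF w_meas \<rho>_meas \<rho>_nonneg])
  also have "\<dots> = (LINT t:Iper|lborel. \<rho> t * v t)"
    unfolding set_lebesgue_integral_def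
    by (rule Bochner_Integration.integral_cong) (auto simp: w_def indicator_def)
  finally show "(\<integral>x. (\<Sum>j\<in>UNIV. v (x $ j)) \<partial>\<gamma>) = (LINT t:Iper|lborel. \<rho> t * v t)" .
qed

lemma AE_vec_nth_not_in_null:
  assumes \<gamma>: "prob_on_cube \<gamma>" and marg: "has_marginal_sum \<gamma> \<rho>" and \<rho>: "set_integrable lborel Iper \<rho>"
    and N: "N \<in> null_sets lborel"
  shows "AE x in \<gamma>. \<forall>j. x $ j \<notin> N"
proof -
  interpret prob_space \<gamma>
    using \<gamma> by (simp add: prob_on_cube_def)
  have nth: "(\<lambda>x. x $ j) \<in> borel_measurable \<gamma>" for j
    using \<gamma> by (rule prob_on_cube_measurable_vec_nth)
  have density_measurable: "(\<lambda>t. ennreal (indicator Iper t * \<rho> t)) \<in> borel_measurable lborel"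
    using \<rho> by (simp add: set_integrable_def borel_measurable_integrable)
  have "N \<in> null_sets (marginal_sum \<gamma>)"
    unfolding marginal_sum_eq_density[OF \<gamma> marg \<rho>] null_sets_density_iff[OF density_measurable]
    using N AE_not_in[OF N] by (auto elim: eventually_mono)
  then have "emeasure \<gamma> {x \<in> space \<gamma>. x $ j \<in> N} = 0" for j
    using emeasure_marginal_sum[OF sigma_finite_measure_axioms nth, of N] N by (simp add: null_sets_def)
  then have "{x \<in> space \<gamma>. x $ j \<in> N} \<in> null_sets \<gamma>" for j
    using measurable_sets[OF nth, of N j] N by (auto simp: null_sets_def Int_def conj_commute)
  then have "AE x in \<gamma>. \<forall>j\<in>UNIV. x \<notin> {x \<in> space \<gamma>. x $ j \<in> N}"
    by (intro AE_finite_allI AE_not_in) auto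
  then show ?thesis
    using AE_space by eventually_elim auto
qed

lemma ereal_integral_ge_pairing:
  fixes c :: "real^'n \<Rightarrow> ereal" and v :: "real \<Rightarrow> real" and \<gamma> :: "(real^'n) measure"
  assumes c_cont: "continuous_on Icube c" and v: "set_integrable lborel Iper v"
    and c_ge: "AE x in lborel. x \<in> Icube \<longrightarrow> ereal (\<Sum>j\<in>UNIV. v (x $ j)) \<le> c x"
    and \<gamma>: "prob_on_cube \<gamma>" and marg: "has_marginal_sum \<gamma> \<rho>" and \<rho>: "continuous_on Iper \<rho>"
  shows "ereal (LINT t:Iper|lborel. \<rho> t * v t) \<le> ereal_integral \<gamma> c"
proof -
  (* v is only known to be measurable on Iper, so the pointwise argument is run for w. *)
  define w where "w t = indicator Iper t * v t" for t
  have w_meas: "w \<in> borel_measurable borel"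
    using v unfolding w_def[abs_def] by (simp add: set_integrable_def borel_measurable_integrable)
  have sum_eq: "(\<Sum>j\<in>UNIV. w (x $ j)) = (\<Sum>j\<in>UNIV. v (x $ j))" if "\<forall>j. x $ j \<in> Iper" for x
    using that by (simp add: w_def)
  have c_ge_w: "AE x in lborel. (\<forall>j. x $ j \<in> Iper) \<longrightarrow> ereal (\<Sum>j\<in>UNIV. w (x $ j)) \<le> c x"
    using c_ge by eventually_elim (simp add: sum_eq Icube_def)
  have "AE x in \<gamma>. ereal (\<Sum>j\<in>UNIV. v (x $ j)) \<le> c x"
    using AE_vec_nth_not_in_null[OF \<gamma> marg continuous_on_Iper_set_integrable[OF \<rho>]
        ess_peak_set_null[of Iper w]] AE_space
  proof eventually_elim
    case (elim x)
    then have "\<forall>j. x $ j \<in> Iper"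
      using \<gamma> by (simp add: prob_on_cube_def Icube_def)
    with elim show ?case
      using ge_sum_off_ess_peak_set[OF Iper_sets w_meas c_cont[unfolded Icube_def] c_ge_w, of x]
      by (simp add: sum_eq)
  qed
  then have "ereal (\<integral>x. (\<Sum>j\<in>UNIV. v (x $ j)) \<partial>\<gamma>) \<le> ereal_integral \<gamma> c"
    by (rule ereal_integral_ge_integral[OF integral_sum_vec_nth(1)[OF \<gamma> marg \<rho> v]])
  then show ?thesis
    by (simp add: integral_sum_vec_nth(2)[OF \<gamma> marg \<rho> v])
qed

section \<open>Periodic H^1 functions\<close>

lemma H1per_continuous:
  assumes "H1per \<xi>"
  shows "continuous_on Iper \<xi>"
proof -
  obtain g where g: "h1per_deriv \<xi> g"
    using assms by (auto simp: H1per_def)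
  have g_int: "set_integrable lborel Iper g"
    using g by (simp add: h1per_deriv_def)
  have "\<xi> x = \<xi> 0 + integral {0..x} g" if x: "x \<in> Iper" for x
  proof -
    have "{0..x} \<subseteq> Iper"
      using x by (simp add: Iper_def)
    then have "set_integrable lborel {0..x} g"
      by (intro set_integrable_subset[OF g_int]) simp_all
    then have "(LINT t:{0..x}|lborel. g t) = integral {0..x} g"
      by (rule set_borel_integral_eq_integral(2))
    with g x show ?thesis
      by (simp add: h1per_deriv_def)
  qed
  moreover have "continuous_on Iper (\<lambda>x. \<xi> 0 + integral {0..x} g)"
    using set_borel_integral_eq_integral(1)[OF g_int]
    by (intro continuous_intros) (simp add: Iper_def indefinite_integral_continuous_1)
  ultimately show ?thesis
    by (metis (no_types, lifting) continuous_on_cong)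
qed

lemma H1per_bounded:
  assumes "H1per \<xi>"
  shows "\<exists>M. \<forall>x\<in>Iper. \<bar>\<xi> x\<bar> \<le> M"
  using compact_imp_bounded[OF compact_continuous_image[OF H1per_continuous[OF assms] compact_Iper]]
  by (auto simp: bounded_iff)

lemma Dper_bounded_below:
  assumes "Dper \<rho>"
  shows "\<exists>m>0. \<forall>x\<in>Iper. m \<le> \<rho> x"
proof -
  have "Iper \<noteq> {}"
    by (simp add: Iper_def)
  then have "\<exists>x0\<in>Iper. \<forall>x\<in>Iper. \<rho> x0 \<le> \<rho> x"
    using assms by (intro continuous_attains_inf[OF compact_Iper _ H1per_continuous]) (simp_all add: Dper_def)
  then obtain x0 where "x0 \<in> Iper" "\<forall>x\<in>Iper. \<rho> x0 \<le> \<rho> x"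
    by blast
  with assms show ?thesis
    by (intro exI[of _ "\<rho> x0"]) (simp add: Dper_def)
qed

lemma h1per_deriv_lincomb:
  assumes \<xi>: "h1per_deriv \<xi> g" and \<eta>: "h1per_deriv \<eta> h"
  shows "h1per_deriv (\<lambda>x. a * \<xi> x + b * \<eta> x) (\<lambda>t. a * g t + b * h t)"
proof -
  have g: "set_integrable lborel Iper g" "set_integrable lborel Iper (\<lambda>x. (g x)\<^sup>2)"
    and h: "set_integrable lborel Iper h" "set_integrable lborel Iper (\<lambda>x. (h x)\<^sup>2)"
    using \<xi> \<eta> by (simp_all add: h1per_deriv_def)
  have "a * \<xi> x + b * \<eta> x = (a * \<xi> 0 + b * \<eta> 0) + (LINT t:{0..x}|lborel. a * g t + b * h t)"
    if x: "x \<in> Iper" for x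
  proof -
    have sub: "{0..x} \<subseteq> Iper"
      using x by (simp add: Iper_def)
    have "set_integrable lborel {0..x} g" "set_integrable lborel {0..x} h"
      by (intro set_integrable_subset[OF g(1) _ sub] set_integrable_subset[OF h(1) _ sub], simp)+
    then have "(LINT t:{0..x}|lborel. a * g t + b * h t)
        = a * (LINT t:{0..x}|lborel. g t) + b * (LINT t:{0..x}|lborel. h t)"
      by (simp add: set_integrable_mult_right)
    with \<xi> \<eta> x show ?thesis
      by (simp add: h1per_deriv_def algebra_simps)
  qed
  with \<xi> \<eta> g h show ?thesis
    by (simp add: h1per_deriv_def set_integrable_square_lincomb set_integrable_mult_right)
qed

lemma H1per_lincomb: "H1per \<xi> \<Longrightarrow> H1per \<eta> \<Longrightarrow> H1per (\<lambda>x. a * \<xi> x + b * \<eta> x)"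
  unfolding H1per_def using h1per_deriv_lincomb by blast

lemma L1_pair_lincomb:
  assumes v: "set_integrable lborel Iper v" and \<xi>: "continuous_on Iper \<xi>" and \<eta>: "continuous_on Iper \<eta>"
  shows "L1_pair v (\<lambda>x. a * \<xi> x + b * \<eta> x) = a * L1_pair v \<xi> + b * L1_pair v \<eta>"
proof -
  have "set_integrable lborel Iper (\<lambda>x. \<xi> x * v x)" "set_integrable lborel Iper (\<lambda>x. \<eta> x * v x)"
    using set_integrable_continuous_mult[OF compact_Iper _ v] \<xi> \<eta> by blast+
  then have "(LINT x:Iper|lborel. a * (\<xi> x * v x) + b * (\<eta> x * v x))
      = a * (LINT x:Iper|lborel. \<xi> x * v x) + b * (LINT x:Iper|lborel. \<eta> x * v x)"
    by (simp add: set_integrable_mult_right)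
  then show ?thesis
    by (simp add: L1_pair_def algebra_simps)
qed

section \<open>Comparison with the Kantorovich potential\<close>

lemma has_marginals_imp_has_marginal_sum:
  fixes \<gamma> :: "(real^'n) measure"
  assumes \<gamma>: "prob_on_cube \<gamma>" and hm: "has_marginals \<gamma> \<rho>"
    and \<rho>: "set_integrable lborel Iper \<rho>" "\<forall>t\<in>Iper. 0 \<le> \<rho> t"
  shows "has_marginal_sum \<gamma> (\<lambda>t. real CARD('n) * \<rho> t)"
  unfolding has_marginal_sum_def
proof
  fix A :: "real set" assume A: "A \<in> sets borel"
  have density_measurable: "(\<lambda>t. ennreal (\<rho> t) * indicator Iper t) \<in> borel_measurable lborel"
  proof -
    have [measurable]: "(\<lambda>t. indicator Iper t * \<rho> t) \<in> borel_measurable borel"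
      using \<rho>(1) by (simp add: set_integrable_def borel_measurable_integrable)
    have "(\<lambda>t. ennreal (indicator Iper t * \<rho> t)) \<in> borel_measurable lborel"
      by measurable
    moreover have "(\<lambda>t. ennreal (indicator Iper t * \<rho> t)) = (\<lambda>t. ennreal (\<rho> t) * indicator Iper t)"
      by (auto simp: indicator_def fun_eq_iff)
    ultimately show ?thesis
      by simp
  qed
  have "measure \<gamma> {x \<in> space \<gamma>. x $ j \<in> A} = (LINT t:(A \<inter> Iper)|lborel. \<rho> t)" for j
  proof -
    have "measure \<gamma> {x \<in> space \<gamma>. x $ j \<in> A} = measure (distr \<gamma> borel (\<lambda>x. x $ j)) A"
      using A prob_on_cube_measurable_vec_nth[OF \<gamma>] by (simp add: measure_distr vimage_def Int_def conj_commute)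
    also have "\<dots> = enn2real (\<integral>\<^sup>+t. ennreal (\<rho> t) * indicator Iper t * indicator A t \<partial>lborel)"
      using hm A unfolding has_marginals_def measure_def
      by (simp add: emeasure_density[OF density_measurable])
    also have "(\<integral>\<^sup>+t. ennreal (\<rho> t) * indicator Iper t * indicator A t \<partial>lborel)
        = ennreal (LINT t:(A \<inter> Iper)|lborel. \<rho> t)"
      unfolding set_lebesgue_integral_def
    proof (subst nn_integral_eq_integral[symmetric])
      show "integrable lborel (\<lambda>t. indicator (A \<inter> Iper) t *\<^sub>R \<rho> t)"
        using set_integrable_subset[OF \<rho>(1), of "A \<inter> Iper"] A by (simp add: set_integrable_def)
      show "AE t in lborel. 0 \<le> indicator (A \<inter> Iper) t *\<^sub>R \<rho> t"
        using \<rho>(2) by (simp add: indicator_def)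
    qed (auto intro!: nn_integral_cong simp: indicator_def)
    also have "enn2real \<dots> = (LINT t:(A \<inter> Iper)|lborel. \<rho> t)"
      unfolding set_lebesgue_integral_def
      using \<rho>(2) by (intro enn2real_ennreal integral_nonneg_AE AE_I2) (simp add: indicator_def)
    finally show ?thesis .
  qed
  then show "(\<Sum>j\<in>UNIV. measure \<gamma> {x \<in> space \<gamma>. x $ j \<in> A}) = (LINT t:(A \<inter> Iper)|lborel. real CARD('n) * \<rho> t)"
    by simp
qed

lemma F_OT_ge_pairing:
  fixes c :: "real^'n \<Rightarrow> ereal" and v \<rho> :: "real \<Rightarrow> real"
  assumes c_cont: "continuous_on Icube c" and v: "set_integrable lborel Iper v"
    and c_ge: "AE x in lborel. x \<in> Icube \<longrightarrow> ereal (\<Sum>j\<in>UNIV. v (x $ j)) \<le> c x"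
    and \<rho>: "continuous_on Iper \<rho>" "\<forall>t\<in>Iper. 0 \<le> \<rho> t"
  shows "ereal (real CARD('n) * L1_pair v \<rho>) \<le> F_OT c \<rho>"
  unfolding F_OT_def
proof (rule Inf_greatest, clarify)
  fix \<gamma> :: "(real^'n) measure"
  assume \<gamma>: "prob_on_cube \<gamma>" and hm: "has_marginals \<gamma> \<rho>"
  have "has_marginal_sum \<gamma> (\<lambda>t. real CARD('n) * \<rho> t)"
    using \<gamma> hm continuous_on_Iper_set_integrable[OF \<rho>(1)] \<rho>(2)
    by (rule has_marginals_imp_has_marginal_sum)
  then have "ereal (LINT t:Iper|lborel. real CARD('n) * \<rho> t * v t) \<le> ereal_integral \<gamma> c"
    using c_cont v c_ge \<gamma> \<rho>(1) by (intro ereal_integral_ge_pairing) (auto intro: continuous_intros)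
  moreover have "(LINT t:Iper|lborel. real CARD('n) * \<rho> t * v t) = real CARD('n) * L1_pair v \<rho>"
    unfolding L1_pair_def by (simp add: mult.assoc mult.commute[of "\<rho> _"] flip: set_integral_mult_right)
  ultimately show "ereal (real CARD('n) * L1_pair v \<rho>) \<le> ereal_integral \<gamma> c"
    by simp
qed

lemma positive_functional_eq_0_if_nonpos_at_unit:
  fixes u :: "('a \<Rightarrow> real) \<Rightarrow> real"
  assumes closed: "\<And>\<xi> \<eta> a b. H \<xi> \<Longrightarrow> H \<eta> \<Longrightarrow> H (\<lambda>x. a * \<xi> x + b * \<eta> x)"
    and linear: "\<And>\<xi> \<eta> a b. H \<xi> \<Longrightarrow> H \<eta> \<Longrightarrow> u (\<lambda>x. a * \<xi> x + b * \<eta> x) = a * u \<xi> + b * u \<eta>"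
    and positive: "\<And>\<xi>. H \<xi> \<Longrightarrow> \<forall>x\<in>S. 0 \<le> \<xi> x \<Longrightarrow> 0 \<le> u \<xi>"
    and unit: "H \<rho>" "0 < m" "\<forall>x\<in>S. m \<le> \<rho> x" "u \<rho> \<le> 0"
    and \<xi>: "H \<xi>" "\<forall>x\<in>S. \<bar>\<xi> x\<bar> \<le> M"
  shows "u \<xi> = 0"
proof -
  define C where "C = \<bar>M\<bar> / m"
  have C: "0 \<le> C" "C * m = \<bar>M\<bar>"
    using unit(2) by (simp_all add: C_def)
  have "0 \<le> s * u \<xi>" if s: "\<bar>s\<bar> = 1" for s
  proof -
    have "0 \<le> C * \<rho> x + s * \<xi> x" if x: "x \<in> S" for x
    proof -
      have "\<bar>s * \<xi> x\<bar> \<le> C * m"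
        using \<xi>(2) x s C(2) by (auto simp: abs_mult)
      also have "\<dots> \<le> C * \<rho> x"
        using unit(3) x C(1) by (simp add: mult_left_mono)
      finally show ?thesis
        using abs_le_iff[of "s * \<xi> x"] by linarith
    qed
    then have "0 \<le> u (\<lambda>x. C * \<rho> x + s * \<xi> x)"
      using positive closed unit(1) \<xi>(1) by blast
    also have "\<dots> = C * u \<rho> + s * u \<xi>"
      using linear unit(1) \<xi>(1) by blast
    also have "\<dots> \<le> s * u \<xi>"
      using C(1) unit(4) by (simp add: mult_nonneg_nonpos)
    finally show ?thesis .
  qed
  from this[of 1] this[of "-1"] show ?thesis
    by simp
qed

lemma L1_pair_eq_normalized_potential:
  fixes c :: "real^'n \<Rightarrow> ereal"
  assumes c_cont: "continuous_on Icube c" and v: "set_integrable lborel Iper v"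
    and c_ge: "AE x in lborel. x \<in> Icube \<longrightarrow> ereal (\<Sum>j\<in>UNIV. v (x $ j)) \<le> c x"
    and \<rho>: "Dper \<rho>" and v0: "normalized_gen_kantorovich_potential c \<rho> v0"
    and above: "\<forall>\<xi>. H1per \<xi> \<and> (\<forall>x\<in>Iper. \<xi> x \<ge> 0) \<longrightarrow> L1_pair v \<xi> - v0 \<xi> \<ge> 0"
    and \<xi>: "H1per \<xi>"
  shows "L1_pair v \<xi> = v0 \<xi>"
proof -
  have \<rho>_H1: "H1per \<rho>" and \<rho>_nonneg: "\<forall>x\<in>Iper. 0 \<le> \<rho> x"
    using \<rho> by (auto simp: Dper_def less_imp_le)
  have v0_linear: "v0 (\<lambda>x. a * \<xi> x + b * \<eta> x) = a * v0 \<xi> + b * v0 \<eta>"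
    if "H1per \<xi>" "H1per \<eta>" for \<xi> \<eta> a b
    using v0 that
    by (simp add: normalized_gen_kantorovich_potential_def gen_kantorovich_potential_def Hm1per_def)
  have "ereal (real CARD('n) * L1_pair v \<rho>) \<le> ereal (real CARD('n) * v0 \<rho>)"
    using F_OT_ge_pairing[OF c_cont v c_ge H1per_continuous[OF \<rho>_H1] \<rho>_nonneg] v0
    by (simp add: normalized_gen_kantorovich_potential_def)
  then have at_\<rho>: "L1_pair v \<rho> - v0 \<rho> \<le> 0"
    by simp
  obtain m where m: "0 < m" "\<forall>x\<in>Iper. m \<le> \<rho> x"
    using Dper_bounded_below[OF \<rho>] by blast
  obtain M where M: "\<forall>x\<in>Iper. \<bar>\<xi> x\<bar> \<le> M"
    using H1per_bounded[OF \<xi>] by blast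
  have linear: "L1_pair v (\<lambda>x. a * \<xi> x + b * \<eta> x) - v0 (\<lambda>x. a * \<xi> x + b * \<eta> x)
      = a * (L1_pair v \<xi> - v0 \<xi>) + b * (L1_pair v \<eta> - v0 \<eta>)"
    if "H1per \<xi>" "H1per \<eta>" for \<xi> \<eta> a b
    using L1_pair_lincomb[OF v H1per_continuous[OF that(1)] H1per_continuous[OF that(2)]]
      v0_linear[OF that] by (simp add: algebra_simps)
  have "L1_pair v \<xi> - v0 \<xi> = 0"
    using above
    by (intro positive_functional_eq_0_if_nonpos_at_unit[where u = "\<lambda>\<xi>. L1_pair v \<xi> - v0 \<xi>",
          OF H1per_lincomb linear _ \<rho>_H1 m at_\<rho> \<xi> M]) auto
  then show ?thesis
    by simp
qed

theorem lemma5p3: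
  fixes c :: "real ^ 'n \<Rightarrow> ereal" and v :: "real \<Rightarrow> real"
  assumes c_cont: "continuous_on Icube c"
    and c_not_minf: "\<forall>x\<in>Icube. c x \<noteq> -\<infinity>"
    and v_L1: "set_integrable lborel Iper v"
    and c_ge: "AE x in lborel. x \<in> Icube \<longrightarrow> c x - ereal (\<Sum>j\<in>UNIV. v (x $ j)) \<ge> 0"
  shows "(\<forall>\<gamma> \<rho>\<gamma>. prob_on_cube \<gamma> \<and> continuous_on Iper \<rho>\<gamma>
            \<and> (\<forall>A\<in>sets borel. (\<Sum>j\<in>UNIV. measure \<gamma> {x\<in>space \<gamma>. x $ j \<in> A})
                                 = (LINT t:(A \<inter> Iper)|lborel. \<rho>\<gamma> t))
          \<longrightarrow> ereal_integral \<gamma> c - ereal (LINT t:Iper|lborel. \<rho>\<gamma> t * v t) \<ge> 0)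
       \<and> (\<forall>\<rho> v0. Dper \<rho> \<and> normalized_gen_kantorovich_potential c \<rho> v0
            \<and> (\<forall>\<xi>. H1per \<xi> \<and> (\<forall>x\<in>Iper. \<xi> x \<ge> 0) \<longrightarrow> L1_pair v \<xi> - v0 \<xi> \<ge> 0)
          \<longrightarrow> (\<forall>\<xi>. H1per \<xi> \<longrightarrow> L1_pair v \<xi> = v0 \<xi>))"
proof -
  have c_ge': "AE x in lborel. x \<in> Icube \<longrightarrow> ereal (\<Sum>j\<in>UNIV. v (x $ j)) \<le> c x"
    using c_ge by (simp add: ereal_diff_nonneg_iff)
  show ?thesis
  proof (intro conjI allI impI; elim conjE)
    fix \<gamma> :: "(real^'n) measure" and \<rho>\<gamma>
    assume "prob_on_cube \<gamma>" "continuous_on Iper \<rho>\<gamma>"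
      "\<forall>A\<in>sets borel. (\<Sum>j\<in>UNIV. measure \<gamma> {x\<in>space \<gamma>. x $ j \<in> A})
                        = (LINT t:(A \<inter> Iper)|lborel. \<rho>\<gamma> t)"
    then show "0 \<le> ereal_integral \<gamma> c - ereal (LINT t:Iper|lborel. \<rho>\<gamma> t * v t)"
      using ereal_integral_ge_pairing[OF c_cont v_L1 c_ge']
      by (simp add: has_marginal_sum_def ereal_diff_nonneg_iff)
  next
    fix \<rho> v0 \<xi>
    assume "Dper \<rho>" "normalized_gen_kantorovich_potential c \<rho> v0"
      "\<forall>\<xi>. H1per \<xi> \<and> (\<forall>x\<in>Iper. 0 \<le> \<xi> x) \<longrightarrow> 0 \<le> L1_pair v \<xi> - v0 \<xi>" "H1per \<xi>"
    then show "L1_pair v \<xi> = v0 \<xi>"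
      by (rule L1_pair_eq_normalized_potential[OF c_cont v_L1 c_ge'])
  qed
qed

end
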